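(* Let $E$ be a Euclidean space, $0<\varepsilon\le1$, and $g\in\mathrm{End}(E)$ with $g\neq0$, $\sigma(g)\le\varepsilon^2/8$ and $g\,\mathbb{A}^\varepsilon\,g$. Then $g$ is proximal (i.e. $\rho_1(g)>\rho_2(g)$) and $$\rho_1(g)\ge\frac\varepsilon2\|g\|,\qquad\frac{\rho_2(g)}{\rho_1(g)}\le\frac{4\sigma(g)}{\varepsilon^2},\qquad\forall u\in U^1(g)\setminus\{0\},\ \mathrm{dist}([u],E^+(g))\le\frac{2\sigma(g)}{\varepsilon}.$$
   Context: $E=\mathbb{R}^d$ with Euclidean norm, operator norm on $\mathrm{End}(E)$. $g\,\mathbb{A}^\varepsilon\,h$ means $\|gh\|\ge\varepsilon\|g\|\|h\|$. $\sigma(g)=\|g\wedge g\|/\|g\|^2=s_2(g)/s_1(g)$. $\rho_1(g)\ge\rho_2(g)\ge\cdots$ are the moduli of the eigenvalues; when $\rho_1>\rho_2$, $E^+(g)$ is the eigenline of the top eigenvalue. $V^1(g)=\{x:\|gx\|=\|g\|\|x\|\}$ and $U^1(g)=g(V^1(g))$. $\mathrm{dist}([x],[y])=\|x\wedge y\|/(\|x\|\|y\|)$ on projective space. *)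

theory Defs
  imports "HOL-Analysis.Analysis" "HOL-Computational_Algebra.Polynomial"
    "HOL-Computational_Algebra.Fundamental_Theorem_Algebra"
begin

text \<open>E = real^'n (Euclidean), End(E) = real^'n^'n acting by matrix-vector product.\<close>

definition opnorm :: "real^'n^'n \<Rightarrow> real" where
  "opnorm g = onorm (\<lambda>x. g *v x)"

definition aligned :: "real^'n^'n \<Rightarrow> real \<Rightarrow> real^'n^'n \<Rightarrow> bool" where
  "aligned g eps h \<longleftrightarrow> opnorm (g ** h) \<ge> eps * opnorm g * opnorm h"

text \<open>Second exterior power: Lambda^2 E is realised as antisymmetric matrices W,
 x\<and>y = x y^T - y x^T, and (g\<and>g) W = g W g^T. The basis e_i\<and>e_j (i<j) is
 orthonormal, so the Euclidean norm on Lambda^2 E is (Frobenius norm)/sqrt 2.\<close>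
definition vwedge :: "real^'n \<Rightarrow> real^'n \<Rightarrow> real^'n^'n" where
  "vwedge x y = (\<chi> i j. x$i * y$j - x$j * y$i)"

definition wnorm :: "real^'n^'n \<Rightarrow> real" where
  "wnorm W = norm W / sqrt 2"

definition ext2_opnorm :: "real^'n^'n \<Rightarrow> real" where
  "ext2_opnorm g = Sup (insert 0 {wnorm (g ** W ** transpose g) / wnorm W | W.
       transpose W = - W \<and> W \<noteq> 0})"

definition sigma :: "real^'n^'n \<Rightarrow> real" where
  "sigma g = ext2_opnorm g / (opnorm g)\<^sup>2"

text \<open>Characteristic polynomial and eigenvalue moduli (with algebraic multiplicity),
 rho g k = k-th largest modulus (k >= 1), 0 if k > dim.\<close>
definition charpoly :: "real^'n^'n \<Rightarrow> real poly" where
  "charpoly g = det (\<chi> i j. (if i = j then [:0, 1:] else 0) - [:g$i$j:])"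

definition eig_moduli :: "real^'n^'n \<Rightarrow> real list" where
  "eig_moduli g = rev (sorted_list_of_multiset
      (image_mset cmod (proots (map_poly complex_of_real (charpoly g)))))"

definition rho :: "real^'n^'n \<Rightarrow> nat \<Rightarrow> real" where
  "rho g k = (if 1 \<le> k \<and> k \<le> length (eig_moduli g) then eig_moduli g ! (k - 1) else 0)"

definition proximal :: "real^'n^'n \<Rightarrow> bool" where
  "proximal g \<longleftrightarrow> rho g 1 > rho g 2"

definition Eplus :: "real^'n^'n \<Rightarrow> (real^'n) set" where
  "Eplus g = {v. \<exists>c::real. \<bar>c\<bar> = rho g 1 \<and> g *v v = c *\<^sub>R v}"

definition V1 :: "real^'n^'n \<Rightarrow> (real^'n) set" where
  "V1 g = {x. norm (g *v x) = opnorm g * norm x}"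

definition U1 :: "real^'n^'n \<Rightarrow> (real^'n) set" where
  "U1 g = (\<lambda>x. g *v x) ` V1 g"

definition pdist :: "real^'n \<Rightarrow> real^'n \<Rightarrow> real" where
  "pdist x y = wnorm (vwedge x y) / (norm x * norm y)"

end

theory Submission
  imports Defs
begin

text \<open>Let \<open>v\<close> be a unit vector with \<open>norm (g v) = norm g\<close> and \<open>u = g v / norm g\<close>. Since
  \<open>g v \<and> g w\<close> has norm at most \<open>norm (g \<and> g) * norm (v \<and> w)\<close>, the map \<open>g\<close> shrinks the
  hyperplane \<open>v\<^sup>\<bottom>\<close> by the factor \<open>sigma g\<close> relative to \<open>norm g\<close>: up to this error \<open>g\<close> is the
  rank-one map \<open>x \<mapsto> norm g (v \<bullet> x) u\<close>, and the alignment \<open>g A\<^sup>\<epsilon> g\<close> forces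
  \<open>\<bar>v \<bullet> u\<bar> \<ge> \<epsilon> - sigma g\<close>. Brouwer's fixed point theorem then produces an eigenvector
  \<open>u + y\<close> with \<open>y \<perp> u\<close>, \<open>norm y \<le> 2 sigma g / \<epsilon>\<close> and large eigenvalue
  \<open>\<lambda> = norm g (v \<bullet> (u + y))\<close>. Splitting \<open>X - \<lambda>\<close> off the characteristic polynomial, every
  remaining complex root \<open>\<mu>\<close> yields a plane that \<open>g\<close> preserves modulo the line through the
  normalised eigenvector \<open>x\<close>; the contraction of \<open>v\<^sup>\<bottom>\<close> bounds \<open>\<bar>\<mu>\<bar> \<bar>v \<bullet> x\<bar>\<close> by
  \<open>sigma g * norm g\<close>, far below \<open>\<bar>\<lambda>\<bar> \<bar>v \<bullet> x\<bar>\<close>. The same bound makes \<open>E\<^sup>+(g)\<close> the line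
  \<open>\<real> x\<close>, while \<open>U\<^sup>1(g) = \<real> u\<close>, so the distance estimate is that of \<open>u\<close> and \<open>u + y\<close>.\<close>

section \<open>Exterior square and operator norm\<close>

lemma transpose_vwedge: "transpose (vwedge a b) = - vwedge a b"
  by (simp add: vwedge_def transpose_def vec_eq_iff)

lemma matrix_vwedge_transpose: "g ** vwedge a b ** transpose g = vwedge (g *v a) (g *v b)"
proof -
  have "(g ** vwedge a b ** transpose g)$i$j = vwedge (g *v a) (g *v b) $i$j" for i j
  proof -
    have "(g ** vwedge a b ** transpose g)$i$j =
      (\<Sum>k\<in>UNIV. \<Sum>l\<in>UNIV. (g$i$l*a$l)*(g$j$k*b$k) - (g$i$l*b$l)*(g$j$k*a$k))"
      by (simp add: matrix_matrix_mult_def transpose_def vwedge_def sum_distrib_left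
          sum_distrib_right algebra_simps)
    also have "\<dots> = (\<Sum>l\<in>UNIV. g$i$l*a$l) * (\<Sum>k\<in>UNIV. g$j$k*b$k)
        - (\<Sum>l\<in>UNIV. g$i$l*b$l) * (\<Sum>k\<in>UNIV. g$j$k*a$k)"
      by (subst sum.swap) (simp add: sum_product sum_subtractf)
    also have "\<dots> = vwedge (g *v a) (g *v b) $i$j"
      by (simp add: vwedge_def matrix_vector_mult_def mult.commute)
    finally show ?thesis .
  qed
  then show ?thesis by (simp add: vec_eq_iff)
qed

lemma norm_vwedge_squared:
  "(norm (vwedge a b))\<^sup>2 = 2 * ((norm a)\<^sup>2 * (norm b)\<^sup>2 - (a \<bullet> b)\<^sup>2)"
proof -
  have sq: "norm z * norm z = (\<Sum>i\<in>UNIV. z$i * z$i)" for z :: "real^'n"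
    by (simp add: power2_norm_eq_inner inner_vec_def flip: power2_eq_square)
  have "(norm (vwedge a b))\<^sup>2 = (\<Sum>i\<in>UNIV. \<Sum>j\<in>UNIV. (a$i*b$j - a$j*b$i)\<^sup>2)"
    unfolding power2_norm_eq_inner by (simp add: inner_vec_def vwedge_def power2_eq_square)
  also have "\<dots> = (\<Sum>i\<in>UNIV. \<Sum>j\<in>UNIV. (a$i*a$i)*(b$j*b$j))
      + (\<Sum>i\<in>UNIV. \<Sum>j\<in>UNIV. (a$j*a$j)*(b$i*b$i)) - 2 * (\<Sum>i\<in>UNIV. \<Sum>j\<in>UNIV. (a$i*b$i)*(a$j*b$j))"
    by (simp add: sum.distrib sum_subtractf sum_distrib_left power2_eq_square algebra_simps)
  also have "\<dots> = 2 * ((norm a)\<^sup>2 * (norm b)\<^sup>2 - (a \<bullet> b)\<^sup>2)"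
    unfolding power2_eq_square sq inner_vec_def inner_real_def sum_product
    by (simp add: sum.swap[of "\<lambda>i j. a$j*a$j*(b$i*b$i)"])
  finally show ?thesis .
qed

lemma wnorm_vwedge: "wnorm (vwedge a b) = sqrt ((norm a)\<^sup>2 * (norm b)\<^sup>2 - (a \<bullet> b)\<^sup>2)"
proof -
  have "norm (vwedge a b) = sqrt (2 * ((norm a)\<^sup>2 * (norm b)\<^sup>2 - (a \<bullet> b)\<^sup>2))"
    by (metis norm_ge_zero norm_vwedge_squared real_sqrt_unique)
  also have "\<dots> = sqrt 2 * sqrt ((norm a)\<^sup>2 * (norm b)\<^sup>2 - (a \<bullet> b)\<^sup>2)"
    by (rule real_sqrt_mult)
  finally show ?thesis by (simp add: wnorm_def)
qed

lemma pdist_scaleR: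
  assumes "a \<noteq> 0" "b \<noteq> 0"
  shows "pdist (a *\<^sub>R p) (b *\<^sub>R q) = pdist p q"
proof -
  have "(norm (a *\<^sub>R p))\<^sup>2 * (norm (b *\<^sub>R q))\<^sup>2 - ((a *\<^sub>R p) \<bullet> (b *\<^sub>R q))\<^sup>2
      = (a * b)\<^sup>2 * ((norm p)\<^sup>2 * (norm q)\<^sup>2 - (p \<bullet> q)\<^sup>2)"
    by (simp add: power_mult_distrib algebra_simps)
  then have "wnorm (vwedge (a *\<^sub>R p) (b *\<^sub>R q)) = \<bar>a * b\<bar> * wnorm (vwedge p q)"
    by (simp only: wnorm_vwedge real_sqrt_mult real_sqrt_abs)
  then show ?thesis using assms by (simp add: pdist_def abs_mult)
qed

lemma norm_matrix_vector_le_opnorm: "norm (g *v x) \<le> opnorm g * norm x"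
  unfolding opnorm_def by (rule onorm) simp

lemma opnorm_nonneg: "0 \<le> opnorm g"
  unfolding opnorm_def by (rule onorm_pos_le) simp

lemma opnorm_le: "(\<And>x. norm (g *v x) \<le> b * norm x) \<Longrightarrow> opnorm g \<le> b"
  unfolding opnorm_def by (rule onorm_le)

lemma opnorm_pos: "g \<noteq> 0 \<Longrightarrow> 0 < opnorm g"
  unfolding opnorm_def by (subst onorm_pos_lt) (auto simp: matrix_eq)

lemma opnorm_attained:
  fixes g :: "real^'n^'n"
  obtains v where "norm v = 1" "norm (g *v v) = opnorm g"
proof -
  have "sphere (0::real^'n) 1 \<noteq> {}"
    using norm_axis_1 by (metis mem_sphere_0 empty_iff)
  moreover have "continuous_on (sphere 0 1) (\<lambda>x. norm (g *v x))"
    by (intro continuous_intros linear_continuous_on) simp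
  ultimately obtain v where v: "v \<in> sphere 0 1"
    and max: "\<And>y. y \<in> sphere 0 1 \<Longrightarrow> norm (g *v y) \<le> norm (g *v v)"
    using continuous_attains_sup[OF compact_sphere] by blast
  have "opnorm g \<le> norm (g *v v)"
  proof (rule opnorm_le)
    fix x :: "real^'n"
    show "norm (g *v x) \<le> norm (g *v v) * norm x"
    proof (cases "x = 0")
      case False
      then have "norm (g *v (inverse (norm x) *\<^sub>R x)) \<le> norm (g *v v)"
        by (intro max) simp
      with False show ?thesis by (simp add: matrix_vector_mult_scaleR field_simps)
    qed simp
  qed
  moreover have "norm (g *v v) \<le> opnorm g"
    using norm_matrix_vector_le_opnorm[of g v] v by simp
  ultimately show ?thesis using v that by simp
qed

lemma bdd_above_ext2_ratios:
  fixes g :: "real^'n^'n"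
  shows "bdd_above (insert 0 {wnorm (g ** W ** transpose g) / wnorm W | W. transpose W = - W \<and> W \<noteq> 0})"
proof -
  have "linear (\<lambda>W::real^'n^'n. g ** W ** transpose g)"
  proof (rule linearI)
    fix A B :: "real^'n^'n" and c :: real
    have "(X + Y) ** Z = X ** Z + Y ** Z" for X Y Z :: "real^'n^'n"
      by (vector matrix_matrix_mult_def sum.distrib distrib_right)
    then show "g ** (A + B) ** transpose g = g ** A ** transpose g + g ** B ** transpose g"
      by (simp add: matrix_add_ldistrib)
    show "g ** (c *\<^sub>R A) ** transpose g = c *\<^sub>R (g ** A ** transpose g)"
      by (simp add: matrix_scalar_ac scalar_matrix_assoc)
  qed
  then obtain K where K: "\<And>W. norm (g ** W ** transpose g) \<le> norm W * K"
    unfolding linear_conv_bounded_linear by (metis bounded_linear.bounded)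
  have "wnorm (g ** W ** transpose g) / wnorm W \<le> K" if "W \<noteq> 0" for W
    using K[of W] that by (simp add: wnorm_def divide_le_eq mult.commute)
  then show ?thesis by (intro bdd_aboveI[of _ "max 0 K"]) force
qed

lemma ext2_opnorm_nonneg: "0 \<le> ext2_opnorm g"
  unfolding ext2_opnorm_def by (intro cSup_upper bdd_above_ext2_ratios) simp

lemma sigma_nonneg: "0 \<le> sigma g"
  by (simp add: sigma_def ext2_opnorm_nonneg)

lemma wnorm_vwedge_image_le:
  "wnorm (vwedge (g *v a) (g *v b)) \<le> ext2_opnorm g * wnorm (vwedge a b)"
proof (cases "vwedge a b = 0")
  case True
  then have "vwedge (g *v a) (g *v b) = 0"
    by (simp add: matrix_matrix_mult_def vec_eq_iff flip: matrix_vwedge_transpose)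
  then show ?thesis using True by (simp add: wnorm_def)
next
  case False
  then have "wnorm (g ** vwedge a b ** transpose g) / wnorm (vwedge a b) \<le> ext2_opnorm g"
    unfolding ext2_opnorm_def
    by (intro cSup_upper bdd_above_ext2_ratios) (auto simp: transpose_vwedge)
  moreover have "0 < wnorm (vwedge a b)" using False by (simp add: wnorm_def)
  ultimately show ?thesis by (simp add: matrix_vwedge_transpose divide_le_eq mult.commute)
qed

section \<open>Matrices with a small exterior square\<close>

lemma norm_add_squared:
  fixes a b :: "'a::real_inner"
  shows "(norm (a + b))\<^sup>2 = (norm a)\<^sup>2 + 2 * (a \<bullet> b) + (norm b)\<^sup>2"
  by (simp add: power2_norm_eq_inner inner_add_left inner_add_right inner_commute)

lemma eq_0_if_linear_le_quadratic:
  fixes p C :: real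
  assumes "\<And>t. t * p \<le> t\<^sup>2 * C"
  shows "p = 0"
proof -
  define c where "c = 2 * (\<bar>C\<bar> + 1)"
  have c: "0 < c" "2 * C < c" unfolding c_def by auto
  have "p / c * p \<le> (p / c)\<^sup>2 * C" by (rule assms)
  also have "\<dots> \<le> (p / c)\<^sup>2 * (c / 2)" using c by (intro mult_left_mono) auto
  also have "\<dots> = p / c * p / 2" using c by (simp add: power2_eq_square)
  finally have "p * p \<le> 0" using c by (simp add: field_simps)
  then show ?thesis by (auto simp: mult_le_0_iff)
qed

lemma cauchy_schwarz_two:
  fixes a b c d :: real
  shows "(a * b + c * d)\<^sup>2 \<le> (a\<^sup>2 + c\<^sup>2) * (b\<^sup>2 + d\<^sup>2)"
proof -
  have "(a * b + c * d)\<^sup>2 + (a * d - c * b)\<^sup>2 = (a\<^sup>2 + c\<^sup>2) * (b\<^sup>2 + d\<^sup>2)" by algebra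
  then show ?thesis by (metis le_add_same_cancel1 zero_le_power2)
qed

lemma orthogonal_inner_squares_le:
  fixes a x v :: "'a::real_inner"
  assumes "a \<bullet> x = 0" and "norm v = 1"
  shows "(v \<bullet> a)\<^sup>2 * (norm x)\<^sup>2 + (v \<bullet> x)\<^sup>2 * (norm a)\<^sup>2 \<le> (norm a)\<^sup>2 * (norm x)\<^sup>2"
proof -
  define A X p q where "A = (norm a)\<^sup>2" "X = (norm x)\<^sup>2" "p = v \<bullet> a" "q = v \<bullet> x"
  have vv: "v \<bullet> v = 1" using assms(2) by (simp flip: power2_norm_eq_inner)
  \<comment> \<open>\<open>A X\<close> times the residual of \<open>v\<close> after projection onto \<open>span {a, x}\<close>\<close>
  have "0 \<le> ((A * X) *\<^sub>R v - (p * X) *\<^sub>R a - (q * A) *\<^sub>R x) \<bullet> ((A * X) *\<^sub>R v - (p * X) *\<^sub>R a - (q * A) *\<^sub>R x)"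
    by (rule inner_ge_zero)
  also have "\<dots> = A * X * (A * X - p\<^sup>2 * X - q\<^sup>2 * A)"
    using assms(1) vv unfolding A_X_p_q_def power2_norm_eq_inner
    by (simp add: inner_diff_left inner_diff_right inner_commute power2_eq_square algebra_simps)
  finally have "0 \<le> A * X * (A * X - p\<^sup>2 * X - q\<^sup>2 * A)" .
  moreover have "A = 0 \<Longrightarrow> p = 0" "X = 0 \<Longrightarrow> q = 0" "0 \<le> A" "0 \<le> X"
    unfolding A_X_p_q_def by simp_all
  ultimately have "p\<^sup>2 * X + q\<^sup>2 * A \<le> A * X"
    by (cases "A = 0 \<or> X = 0") (auto simp: zero_le_mult_iff mult_le_0_iff)
  then show ?thesis unfolding A_X_p_q_def .
qed

lemma brouwer_radius_arith:
  fixes eps sg c :: real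
  assumes "0 < eps" "eps \<le> 1" "0 \<le> sg" "sg \<le> eps\<^sup>2 / 8" "eps - sg \<le> c"
  shows "5 * eps / 8 \<le> c - 2 * sg / eps"
    and "sg * (1 + 2 * sg / eps) \<le> 2 * sg / eps * (c - 2 * sg / eps)"
proof -
  have r: "2 * sg / eps \<le> eps / 4"
    using assms(1,4) by (simp add: divide_le_eq power2_eq_square)
  have "eps\<^sup>2 \<le> eps" using assms(1,2) mult_left_le[of eps eps] by (simp add: power2_eq_square)
  then have "sg \<le> eps / 8" using assms(4) by simp
  with r assms(5) show c: "5 * eps / 8 \<le> c - 2 * sg / eps" by simp
  have "sg * (1 + 2 * sg / eps) \<le> sg * (5 / 4)"
    using r assms(2,3) by (intro mult_left_mono) simp_all
  also have "\<dots> = 2 * sg / eps * (5 * eps / 8)" using assms(1) by simp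
  also have "\<dots> \<le> 2 * sg / eps * (c - 2 * sg / eps)"
    using c assms(1,3) by (intro mult_left_mono) simp_all
  finally show "sg * (1 + 2 * sg / eps) \<le> 2 * sg / eps * (c - 2 * sg / eps)" .
qed

lemma abs_mult_le_if_squares_le:
  fixes m c d :: real
  assumes "m\<^sup>2 * c\<^sup>2 \<le> d\<^sup>2" "0 \<le> d"
  shows "\<bar>m\<bar> * \<bar>c\<bar> \<le> d"
  by (rule power2_le_imp_le) (use assms in \<open>simp_all add: power_mult_distrib\<close>)

lemma top_singular_vector_image_orthogonal:
  fixes g :: "real^'n^'n"
  assumes v: "norm v = 1" "norm (g *v v) = opnorm g" and "w \<bullet> v = 0"
  shows "(g *v v) \<bullet> (g *v w) = 0"
proof -
  have "t * (2 * ((g *v v) \<bullet> (g *v w))) \<le> t\<^sup>2 * ((opnorm g)\<^sup>2 * (norm w)\<^sup>2)" for t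
  proof -
    have "(norm (g *v v + t *\<^sub>R (g *v w)))\<^sup>2 \<le> (opnorm g * norm (v + t *\<^sub>R w))\<^sup>2"
      using norm_matrix_vector_le_opnorm[of g "v + t *\<^sub>R w"]
      by (simp add: power_mono matrix_vector_right_distrib matrix_vector_mult_scaleR)
    moreover have "(norm (v + t *\<^sub>R w))\<^sup>2 = 1 + t\<^sup>2 * (norm w)\<^sup>2"
      using assms by (simp add: norm_add_squared inner_commute power_mult_distrib)
    moreover have "(norm (g *v v + t *\<^sub>R (g *v w)))\<^sup>2
        = (opnorm g)\<^sup>2 + t * (2 * ((g *v v) \<bullet> (g *v w))) + t\<^sup>2 * (norm (g *v w))\<^sup>2"
      using v by (simp add: norm_add_squared power_mult_distrib)
    ultimately have "t * (2 * ((g *v v) \<bullet> (g *v w))) + t\<^sup>2 * (norm (g *v w))\<^sup>2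
        \<le> t\<^sup>2 * ((opnorm g)\<^sup>2 * (norm w)\<^sup>2)"
      by (simp add: power_mult_distrib algebra_simps)
    moreover have "0 \<le> t\<^sup>2 * (norm (g *v w))\<^sup>2" by simp
    ultimately show ?thesis by linarith
  qed
  then show ?thesis using eq_0_if_linear_le_quadratic by fastforce
qed

lemma norm_image_orthogonal_top_le:
  fixes g :: "real^'n^'n"
  assumes v: "norm v = 1" "norm (g *v v) = opnorm g" and wv: "w \<bullet> v = 0"
  shows "norm (g *v w) \<le> sigma g * opnorm g * norm w"
proof (cases "g = 0")
  case False
  then have s: "0 < opnorm g" by (rule opnorm_pos)
  have "opnorm g * norm (g *v w) = wnorm (vwedge (g *v v) (g *v w))"
    using top_singular_vector_image_orthogonal[OF assms] v s
    by (simp add: wnorm_vwedge power_mult_distrib real_sqrt_mult)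
  also have "\<dots> \<le> ext2_opnorm g * wnorm (vwedge v w)" by (rule wnorm_vwedge_image_le)
  also have "\<dots> = opnorm g * (sigma g * opnorm g * norm w)"
    using wv v s by (simp add: wnorm_vwedge inner_commute sigma_def field_simps power2_eq_square)
  finally show ?thesis using s by simp
qed (simp add: sigma_nonneg opnorm_nonneg)

locale top_singular_vector =
  fixes g :: "real^'n^'n" and v :: "real^'n"
  assumes nonzero: "g \<noteq> 0" and norm_v: "norm v = 1" and norm_image_v: "norm (g *v v) = opnorm g"
begin

definition u :: "real^'n" where "u = (1 / opnorm g) *\<^sub>R (g *v v)"

definition perp :: "real^'n \<Rightarrow> real^'n" where "perp x = x - (v \<bullet> x) *\<^sub>R v"

lemma opnorm_positive: "0 < opnorm g"
  using opnorm_pos[OF nonzero] .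

lemma image_v: "g *v v = opnorm g *\<^sub>R u"
  using opnorm_positive by (simp add: u_def)

lemma norm_u: "norm u = 1"
  using opnorm_positive norm_image_v by (simp add: u_def)

lemma inner_v_v: "v \<bullet> v = 1"
  using norm_v by (simp flip: power2_norm_eq_inner)

lemma perp_orthogonal: "perp x \<bullet> v = 0"
  by (simp add: perp_def inner_diff_left inner_diff_right inner_commute inner_v_v)

lemma norm_perp_squared: "(norm (perp x))\<^sup>2 = (norm x)\<^sup>2 - (v \<bullet> x)\<^sup>2"
proof -
  have "(norm (perp x))\<^sup>2 = x \<bullet> x - 2 * (v \<bullet> x)\<^sup>2 + (v \<bullet> x)\<^sup>2 * (v \<bullet> v)"
    unfolding power2_norm_eq_inner
    by (simp add: perp_def inner_diff_left inner_diff_right inner_commute algebra_simps power2_eq_square)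
  then show ?thesis by (simp add: inner_v_v power2_norm_eq_inner)
qed

lemma norm_perp_le: "norm (perp x) \<le> norm x"
  by (rule power2_le_imp_le) (simp_all add: norm_perp_squared)

lemma image_decomposition: "g *v x = (opnorm g * (v \<bullet> x)) *\<^sub>R u + g *v perp x"
  by (simp add: perp_def matrix_vector_mult_diff_distrib matrix_vector_mult_scaleR image_v)

lemma u_orthogonal_image_perp: "u \<bullet> (g *v perp x) = 0"
  using top_singular_vector_image_orthogonal[OF norm_v norm_image_v perp_orthogonal]
  by (simp add: u_def)

lemma norm_image_perp_le: "norm (g *v perp x) \<le> sigma g * opnorm g * norm (perp x)"
  by (rule norm_image_orthogonal_top_le[OF norm_v norm_image_v perp_orthogonal])

lemma norm_image_squared:
  "(norm (g *v x))\<^sup>2 = (opnorm g * (v \<bullet> x))\<^sup>2 + (norm (g *v perp x))\<^sup>2"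
  by (subst image_decomposition)
    (simp add: norm_add_squared u_orthogonal_image_perp norm_u power_mult_distrib)

lemma norm_image_u_squared_le: "(norm (g *v u))\<^sup>2 \<le> (opnorm g)\<^sup>2 * ((v \<bullet> u)\<^sup>2 + (sigma g)\<^sup>2)"
proof -
  have "norm (g *v perp u) \<le> sigma g * opnorm g * norm u"
    using norm_image_perp_le[of u] norm_perp_le[of u] sigma_nonneg[of g] opnorm_nonneg[of g]
    by (meson mult_left_mono mult_nonneg_nonneg order_trans)
  then have "(norm (g *v perp u))\<^sup>2 \<le> (sigma g * opnorm g)\<^sup>2"
    unfolding norm_u mult_1_right by (rule power_mono) simp
  then show ?thesis using norm_image_squared[of u] by (simp add: power_mult_distrib algebra_simps)
qed

lemma norm_image_image_squared_le:
  "(norm (g *v (g *v x)))\<^sup>2 \<le> (opnorm g)^4 * ((v \<bullet> u)\<^sup>2 + 2 * (sigma g)\<^sup>2) * (norm x)\<^sup>2"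
proof -
  let ?s = "opnorm g" and ?p = "v \<bullet> x" and ?q = "norm (perp x)" and ?A = "norm (g *v u)"
  have "g *v (g *v x) = (?s * ?p) *\<^sub>R (g *v u) + g *v (g *v perp x)"
    by (subst image_decomposition) (simp add: matrix_vector_right_distrib matrix_vector_mult_scaleR)
  then have "norm (g *v (g *v x)) \<le> \<bar>?s * ?p\<bar> * ?A + norm (g *v (g *v perp x))"
    by (simp add: norm_triangle_ineq[THEN order_trans])
  also have "\<dots> \<le> \<bar>?s * ?p\<bar> * ?A + ?s * (sigma g * ?s * ?q)"
    using norm_matrix_vector_le_opnorm[of g "g *v perp x"] norm_image_perp_le[of x] opnorm_nonneg[of g]
    by (meson add_left_mono mult_left_mono order_trans)
  also have "\<bar>?s * ?p\<bar> * ?A + ?s * (sigma g * ?s * ?q) = \<bar>?p\<bar> * (?s * ?A) + ?q * (?s\<^sup>2 * sigma g)"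
    using opnorm_nonneg[of g] by (simp add: abs_mult power2_eq_square)
  finally have "(norm (g *v (g *v x)))\<^sup>2 \<le> (\<bar>?p\<bar> * (?s * ?A) + ?q * (?s\<^sup>2 * sigma g))\<^sup>2"
    by (rule power_mono) simp
  also have "\<dots> \<le> (\<bar>?p\<bar>\<^sup>2 + ?q\<^sup>2) * ((?s * ?A)\<^sup>2 + (?s\<^sup>2 * sigma g)\<^sup>2)"
    by (rule cauchy_schwarz_two)
  also have "\<dots> \<le> (norm x)\<^sup>2 * (?s ^ 4 * ((v \<bullet> u)\<^sup>2 + 2 * (sigma g)\<^sup>2))"
  proof (rule mult_mono)
    show "\<bar>?p\<bar>\<^sup>2 + ?q\<^sup>2 \<le> (norm x)\<^sup>2" by (simp add: norm_perp_squared)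
    have "(?s * ?A)\<^sup>2 \<le> ?s\<^sup>2 * (?s\<^sup>2 * ((v \<bullet> u)\<^sup>2 + (sigma g)\<^sup>2))"
      unfolding power_mult_distrib by (intro mult_left_mono norm_image_u_squared_le) simp
    moreover have "?s ^ 4 * ((v \<bullet> u)\<^sup>2 + 2 * (sigma g)\<^sup>2)
        = ?s\<^sup>2 * (?s\<^sup>2 * ((v \<bullet> u)\<^sup>2 + (sigma g)\<^sup>2)) + (?s\<^sup>2 * sigma g)\<^sup>2"
      by algebra
    ultimately show "(?s * ?A)\<^sup>2 + (?s\<^sup>2 * sigma g)\<^sup>2 \<le> ?s ^ 4 * ((v \<bullet> u)\<^sup>2 + 2 * (sigma g)\<^sup>2)"
      by linarith
  qed simp_all
  finally show ?thesis by (metis mult.commute)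
qed

lemma eps_squared_le_if_aligned:
  assumes "aligned g eps g" "0 \<le> eps"
  shows "eps\<^sup>2 \<le> (v \<bullet> u)\<^sup>2 + 2 * (sigma g)\<^sup>2"
proof -
  define K where "K = (v \<bullet> u)\<^sup>2 + 2 * (sigma g)\<^sup>2"
  have K: "0 \<le> K" unfolding K_def by simp
  have "opnorm (g ** g) \<le> (opnorm g)\<^sup>2 * sqrt K"
  proof (rule opnorm_le)
    fix x
    have "(norm ((g ** g) *v x))\<^sup>2 \<le> ((opnorm g)\<^sup>2 * sqrt K * norm x)\<^sup>2"
      using norm_image_image_squared_le[of x] K
      by (simp add: K_def power_mult_distrib power4_eq_xxxx power2_eq_square algebra_simps
          flip: matrix_vector_mul_assoc)
    then show "norm ((g ** g) *v x) \<le> (opnorm g)\<^sup>2 * sqrt K * norm x"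
      by (rule power2_le_imp_le) (simp add: K)
  qed
  moreover have "eps * (opnorm g)\<^sup>2 \<le> opnorm (g ** g)"
    using assms(1) by (simp add: aligned_def power2_eq_square mult.assoc)
  ultimately have "(opnorm g)\<^sup>2 * eps \<le> (opnorm g)\<^sup>2 * sqrt K" by (simp add: mult.commute)
  then have "eps \<le> sqrt K" using opnorm_positive by simp
  then have "eps\<^sup>2 \<le> K" using assms(2) K by (metis power_mono real_sqrt_pow2)
  then show ?thesis unfolding K_def .
qed

lemma image_parallel_u_if_norm_attained:
  assumes "sigma g < 1" and "norm (g *v w) = opnorm g * norm w"
  shows "g *v w = (opnorm g * (v \<bullet> w)) *\<^sub>R u"
proof -
  have "(opnorm g)\<^sup>2 * (norm (perp w))\<^sup>2 = (norm (g *v perp w))\<^sup>2"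
    using norm_image_squared[of w] assms(2) unfolding norm_perp_squared
    by (simp add: power_mult_distrib right_diff_distrib)
  also have "\<dots> \<le> (sigma g * opnorm g * norm (perp w))\<^sup>2"
    by (rule power_mono[OF norm_image_perp_le]) simp
  finally have "(1 - (sigma g)\<^sup>2) * ((opnorm g)\<^sup>2 * (norm (perp w))\<^sup>2) \<le> 0"
    by (simp add: power_mult_distrib algebra_simps)
  moreover have "0 < 1 - (sigma g)\<^sup>2"
    using assms(1) sigma_nonneg[of g] by (simp add: power_less_one_iff abs_square_less_1)
  ultimately have "perp w = 0"
    using opnorm_positive by (simp add: mult_le_0_iff)
  then show ?thesis using image_decomposition[of w] by simp
qed


lemma norm_compression_squared_le:
  assumes "g *v x = lam *\<^sub>R x" "a \<bullet> x = 0" "g *v a = w + t *\<^sub>R x" "w \<bullet> x = 0"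
  shows "(norm w)\<^sup>2 * (v \<bullet> x)\<^sup>2 \<le> (sigma g * opnorm g)\<^sup>2 * ((norm a)\<^sup>2 * (norm x)\<^sup>2)"
proof (cases "v \<bullet> x = 0")
  case False
  \<comment> \<open>Correcting \<open>a\<close> along the eigenvector \<open>x\<close> makes it orthogonal to \<open>v\<close>, where \<open>g\<close> contracts.\<close>
  define k where "k = (v \<bullet> a) / (v \<bullet> x)"
  define a' where "a' = a - k *\<^sub>R x"
  have a'v: "a' \<bullet> v = 0"
    using False by (simp add: a'_def k_def inner_diff_left inner_commute[of a v] inner_commute[of x v])
  have "g *v a' = w + (t - k * lam) *\<^sub>R x"
    using assms(1,3) by (simp add: a'_def matrix_vector_mult_diff_distrib matrix_vector_mult_scaleR
        algebra_simps)
  then have "(norm w)\<^sup>2 \<le> (norm (g *v a'))\<^sup>2"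
    using assms(4) by (simp add: norm_add_squared)
  also have "\<dots> \<le> (sigma g * opnorm g * norm a')\<^sup>2"
    by (rule power_mono[OF norm_image_orthogonal_top_le[OF norm_v norm_image_v a'v]]) simp
  finally have w: "(norm w)\<^sup>2 \<le> (sigma g * opnorm g)\<^sup>2 * (norm a')\<^sup>2"
    by (simp add: power_mult_distrib)
  have "(norm a')\<^sup>2 = (norm a)\<^sup>2 + k\<^sup>2 * (norm x)\<^sup>2"
    using assms(2) unfolding a'_def
    by (simp add: norm_add_squared[of a "- (k *\<^sub>R x)", simplified] power_mult_distrib)
  then have "(norm a')\<^sup>2 * (v \<bullet> x)\<^sup>2 = (norm a)\<^sup>2 * (v \<bullet> x)\<^sup>2 + (v \<bullet> a)\<^sup>2 * (norm x)\<^sup>2"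
    using False by (simp add: k_def field_simps power2_eq_square)
  also have "\<dots> \<le> (norm a)\<^sup>2 * (norm x)\<^sup>2"
    using orthogonal_inner_squares_le[OF assms(2) norm_v] by (simp add: algebra_simps)
  finally have a': "(norm a')\<^sup>2 * (v \<bullet> x)\<^sup>2 \<le> (norm a)\<^sup>2 * (norm x)\<^sup>2" .
  have "(norm w)\<^sup>2 * (v \<bullet> x)\<^sup>2 \<le> (sigma g * opnorm g)\<^sup>2 * (norm a')\<^sup>2 * (v \<bullet> x)\<^sup>2"
    using w by (rule mult_right_mono) simp
  also have "\<dots> \<le> (sigma g * opnorm g)\<^sup>2 * ((norm a)\<^sup>2 * (norm x)\<^sup>2)"
    using a' by (simp add: mult.assoc mult_left_mono)
  finally show ?thesis .
qed simp

lemma eigenvalue_bound_from_invariant_pair: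
  assumes "g *v x = lam *\<^sub>R x" "A \<bullet> x = 0" "B \<bullet> x = 0" "A \<noteq> 0 \<or> B \<noteq> 0"
    and "g *v A = al *\<^sub>R A - be *\<^sub>R B + t1 *\<^sub>R x"
    and "g *v B = be *\<^sub>R A + al *\<^sub>R B + t2 *\<^sub>R x"
  shows "(al\<^sup>2 + be\<^sup>2) * (v \<bullet> x)\<^sup>2 \<le> (sigma g * opnorm g)\<^sup>2 * (norm x)\<^sup>2"
proof -
  let ?C = "(sigma g * opnorm g)\<^sup>2 * (norm x)\<^sup>2" and ?P = "(norm A)\<^sup>2 + (norm B)\<^sup>2"
  define NA NB where "NA = (norm (al *\<^sub>R A - be *\<^sub>R B))\<^sup>2" "NB = (norm (be *\<^sub>R A + al *\<^sub>R B))\<^sup>2"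
  have "NA * (v \<bullet> x)\<^sup>2 \<le> ?C * (norm A)\<^sup>2"
    using norm_compression_squared_le[OF assms(1,2,5)] assms(2,3)
    by (simp add: NA_NB_def inner_diff_left mult_ac)
  moreover have "NB * (v \<bullet> x)\<^sup>2 \<le> ?C * (norm B)\<^sup>2"
    using norm_compression_squared_le[OF assms(1,3,6)] assms(2,3)
    by (simp add: NA_NB_def inner_add_left mult_ac)
  ultimately have sum: "NA * (v \<bullet> x)\<^sup>2 + NB * (v \<bullet> x)\<^sup>2 \<le> ?C * (norm A)\<^sup>2 + ?C * (norm B)\<^sup>2"
    by (rule add_mono)
  have "NA + NB = (al\<^sup>2 + be\<^sup>2) * ?P"
    unfolding NA_NB_def power2_norm_eq_inner
    by (simp add: inner_diff_left inner_diff_right inner_add_left inner_add_right inner_commute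
        power2_eq_square algebra_simps)
  then have "?P * ((al\<^sup>2 + be\<^sup>2) * (v \<bullet> x)\<^sup>2) = NA * (v \<bullet> x)\<^sup>2 + NB * (v \<bullet> x)\<^sup>2"
    by (simp flip: distrib_right add: mult_ac)
  also have "\<dots> \<le> ?P * ?C" using sum by (simp add: algebra_simps)
  finally have "?P * ((al\<^sup>2 + be\<^sup>2) * (v \<bullet> x)\<^sup>2) \<le> ?P * ?C" .
  moreover have "0 < ?P"
    using assms(4) by (auto simp: add_pos_nonneg add_nonneg_pos)
  ultimately show ?thesis by simp
qed

lemma norm_u_add_orthogonal_squared: "u \<bullet> y = 0 \<Longrightarrow> (norm (u + y))\<^sup>2 = 1 + (norm y)\<^sup>2"
  by (simp add: norm_add_squared norm_u)

lemma pdist_u_add_orthogonal: "u \<bullet> y = 0 \<Longrightarrow> pdist u (u + y) = norm y / norm (u + y)"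
  using norm_u_add_orthogonal_squared[of y] norm_u
  by (simp add: pdist_def wnorm_vwedge inner_add_right norm_eq_1[THEN iffD1, OF norm_u])

definition fixed_point_map :: "real^'n \<Rightarrow> real^'n" where
  "fixed_point_map y = (1 / (opnorm g * (v \<bullet> (u + y)))) *\<^sub>R (g *v perp (u + y))"

lemma eigenvector_if_fixed_point:
  assumes "fixed_point_map y = y" "v \<bullet> (u + y) \<noteq> 0"
  shows "u \<bullet> y = 0" and "g *v (u + y) = (opnorm g * (v \<bullet> (u + y))) *\<^sub>R (u + y)"
proof -
  have "g *v perp (u + y) = (opnorm g * (v \<bullet> (u + y))) *\<^sub>R fixed_point_map y"
    using assms(2) opnorm_positive by (simp add: fixed_point_map_def)
  then have image_perp: "g *v perp (u + y) = (opnorm g * (v \<bullet> (u + y))) *\<^sub>R y"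
    unfolding assms(1) .
  show "u \<bullet> y = 0"
    using u_orthogonal_image_perp[of "u + y"] assms(2) opnorm_positive unfolding image_perp by simp
  show "g *v (u + y) = (opnorm g * (v \<bullet> (u + y))) *\<^sub>R (u + y)"
    by (subst image_decomposition) (simp add: image_perp scaleR_add_right)
qed

end

locale aligned_top_singular_vector = top_singular_vector +
  fixes eps :: real
  assumes eps_pos: "0 < eps" and eps_le_1: "eps \<le> 1" and sigma_le: "sigma g \<le> eps\<^sup>2 / 8"
    and aligned: "aligned g eps g"
begin

definition radius :: real where "radius = 2 * sigma g / eps"

lemma radius_nonneg: "0 \<le> radius"
  using sigma_nonneg[of g] eps_pos by (simp add: radius_def)

lemma radius_le: "radius \<le> eps / 4"
  using eps_pos sigma_le by (simp add: radius_def divide_le_eq power2_eq_square)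

lemma abs_inner_v_u_lower_bound: "eps - sigma g \<le> \<bar>v \<bullet> u\<bar>"
proof -
  have "eps\<^sup>2 \<le> eps" using eps_pos eps_le_1 mult_left_le[of eps eps] by (simp add: power2_eq_square)
  then have "sigma g * sigma g \<le> eps / 8 * sigma g"
    using sigma_le sigma_nonneg[of g] by (intro mult_right_mono) simp_all
  moreover have "0 \<le> eps * sigma g" using eps_pos sigma_nonneg[of g] by simp
  ultimately have "(eps - sigma g)\<^sup>2 \<le> eps\<^sup>2 - 2 * (sigma g)\<^sup>2"
    by (simp add: power2_eq_square algebra_simps)
  also have "\<dots> \<le> \<bar>v \<bullet> u\<bar>\<^sup>2"
    using eps_squared_le_if_aligned[OF aligned] eps_pos by simp
  finally show ?thesis by (rule power2_le_imp_le) simp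
qed

lemmas radius_arith = brouwer_radius_arith[OF eps_pos eps_le_1 sigma_nonneg sigma_le
    abs_inner_v_u_lower_bound, folded radius_def]

lemma abs_inner_v_u_add_ge: "y \<in> cball 0 radius \<Longrightarrow> \<bar>v \<bullet> u\<bar> - radius \<le> \<bar>v \<bullet> (u + y)\<bar>"
  using Cauchy_Schwarz_ineq2[of v y] norm_v by (simp add: inner_add_right)

lemma inner_v_u_add_nonzero: "y \<in> cball 0 radius \<Longrightarrow> v \<bullet> (u + y) \<noteq> 0"
  using abs_inner_v_u_add_ge radius_arith(1) eps_pos by fastforce

lemma continuous_on_fixed_point_map: "continuous_on (cball 0 radius) fixed_point_map"
proof -
  have "continuous_on (cball 0 radius) (\<lambda>y. g *v perp (u + y))"
    by (intro linear_continuous_on_compose[OF _ matrix_vector_mul_linear])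
      (simp add: perp_def continuous_intros)
  then show ?thesis
    unfolding fixed_point_map_def using inner_v_u_add_nonzero opnorm_positive
    by (intro continuous_intros) auto
qed

lemma fixed_point_map_cball: "y \<in> cball 0 radius \<Longrightarrow> fixed_point_map y \<in> cball 0 radius"
proof -
  let ?c = "\<bar>v \<bullet> u\<bar> - radius"
  assume y: "y \<in> cball 0 radius"
  have "norm (perp (u + y)) \<le> 1 + radius"
    using norm_perp_le[of "u + y"] norm_triangle_ineq[of u y] norm_u y by simp
  then have "norm (g *v perp (u + y)) \<le> sigma g * opnorm g * (1 + radius)"
    using norm_image_perp_le[of "u + y"] sigma_nonneg[of g] opnorm_nonneg[of g]
    by (meson mult_left_mono mult_nonneg_nonneg order_trans)
  moreover have "opnorm g * ?c \<le> \<bar>opnorm g * (v \<bullet> (u + y))\<bar>"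
    using abs_inner_v_u_add_ge[OF y] opnorm_positive by (simp add: abs_mult)
  moreover have "0 < ?c" using radius_arith(1) eps_pos by linarith
  ultimately have "norm (g *v perp (u + y)) / \<bar>opnorm g * (v \<bullet> (u + y))\<bar>
      \<le> sigma g * opnorm g * (1 + radius) / (opnorm g * ?c)"
    using opnorm_positive sigma_nonneg[of g] radius_nonneg by (intro frac_le) simp_all
  then have "norm (fixed_point_map y) \<le> sigma g * opnorm g * (1 + radius) / (opnorm g * ?c)"
    unfolding fixed_point_map_def norm_scaleR abs_divide abs_one by simp
  also have "\<dots> \<le> radius"
    using radius_arith(2) \<open>0 < ?c\<close> opnorm_positive by (simp add: divide_le_eq mult.commute)
  finally show ?thesis by simp
qed

lemma eigenvector_near_u:
  obtains y where "u \<bullet> y = 0" "norm y \<le> radius"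
    "g *v (u + y) = (opnorm g * (v \<bullet> (u + y))) *\<^sub>R (u + y)"
    "5 * eps / 8 \<le> \<bar>v \<bullet> (u + y)\<bar>"
proof -
  obtain y where y: "y \<in> cball 0 radius" and "fixed_point_map y = y"
    using brouwer[OF compact_cball convex_cball _ continuous_on_fixed_point_map]
      fixed_point_map_cball radius_nonneg by auto
  with inner_v_u_add_nonzero[OF y] have "u \<bullet> y = 0"
    and "g *v (u + y) = (opnorm g * (v \<bullet> (u + y))) *\<^sub>R (u + y)"
    by (blast intro: eigenvector_if_fixed_point)+
  moreover have "5 * eps / 8 \<le> \<bar>v \<bullet> (u + y)\<bar>"
    using abs_inner_v_u_add_ge[OF y] radius_arith(1) by linarith
  ultimately show ?thesis using that y by simp
qed

lemma norm_eigenvector_near_u: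
  assumes "u \<bullet> y = 0" "norm y \<le> radius" "5 * eps / 8 \<le> \<bar>v \<bullet> (u + y)\<bar>"
  shows "1 \<le> norm (u + y)" and "eps\<^sup>2 * norm (u + y) \<le> 4 * (v \<bullet> (u + y))\<^sup>2"
proof -
  show "1 \<le> norm (u + y)"
    by (rule power2_le_imp_le) (simp_all add: norm_u_add_orthogonal_squared[OF assms(1)])
  have "norm (u + y) \<le> 5 / 4"
    using norm_triangle_ineq[of u y] norm_u assms(2) radius_le eps_le_1 by linarith
  then have "eps\<^sup>2 * norm (u + y) \<le> eps\<^sup>2 * (5 / 4)" by (rule mult_left_mono) simp
  also have "\<dots> \<le> 4 * (5 * eps / 8)\<^sup>2" by (simp add: power_divide power_mult_distrib)
  also have "\<dots> \<le> 4 * (v \<bullet> (u + y))\<^sup>2"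
    using power_mono[OF assms(3), of 2] eps_pos by simp
  finally show "eps\<^sup>2 * norm (u + y) \<le> 4 * (v \<bullet> (u + y))\<^sup>2" .
qed

lemma dominant_eigenvector:
  obtains x lam where "norm x = 1" "g *v x = lam *\<^sub>R x" "0 < \<bar>lam\<bar> * \<bar>v \<bullet> x\<bar>"
    "eps / 2 * opnorm g \<le> \<bar>lam\<bar>"
    "sigma g * opnorm g \<le> 4 * sigma g / eps\<^sup>2 * (\<bar>lam\<bar> * \<bar>v \<bullet> x\<bar>)"
    "pdist u x \<le> 2 * sigma g / eps"
proof -
  obtain y where y: "u \<bullet> y = 0" "norm y \<le> radius"
    "g *v (u + y) = (opnorm g * (v \<bullet> (u + y))) *\<^sub>R (u + y)" "5 * eps / 8 \<le> \<bar>v \<bullet> (u + y)\<bar>"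
    by (rule eigenvector_near_u)
  define n t where "n = norm (u + y)" and "t = \<bar>v \<bullet> (u + y)\<bar>"
  have n1: "1 \<le> n" and "eps\<^sup>2 * n \<le> 4 * t\<^sup>2"
    using norm_eigenvector_near_u[OF y(1,2,4)] by (simp_all add: n_def t_def)
  then have "1 \<le> 4 * t\<^sup>2 / (eps\<^sup>2 * n)" using eps_pos by simp
  then have scaled: "sigma g * opnorm g \<le> sigma g * opnorm g * (4 * t\<^sup>2 / (eps\<^sup>2 * n))"
    using sigma_nonneg[of g] opnorm_nonneg[of g] mult_left_mono by fastforce
  have "u + y \<noteq> 0" using n1 unfolding n_def by (metis norm_zero not_one_le_zero)
  define x lam where "x = (1 / n) *\<^sub>R (u + y)" and "lam = opnorm g * (v \<bullet> (u + y))"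
  have "norm x = 1" using n1 \<open>u + y \<noteq> 0\<close> by (simp add: x_def n_def)
  have prod: "\<bar>lam\<bar> * \<bar>v \<bullet> x\<bar> = opnorm g * t\<^sup>2 / n"
    using n1 opnorm_positive by (simp add: t_def x_def lam_def abs_mult power2_eq_square)
  with scaled have ratio: "sigma g * opnorm g \<le> 4 * sigma g / eps\<^sup>2 * (\<bar>lam\<bar> * \<bar>v \<bullet> x\<bar>)"
    by (simp add: field_simps)
  show ?thesis
  proof
    show "norm x = 1" "sigma g * opnorm g \<le> 4 * sigma g / eps\<^sup>2 * (\<bar>lam\<bar> * \<bar>v \<bullet> x\<bar>)" by fact+
    show "g *v x = lam *\<^sub>R x" using y(3) by (simp add: x_def lam_def matrix_vector_mult_scaleR)
    show "0 < \<bar>lam\<bar> * \<bar>v \<bullet> x\<bar>"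
      unfolding prod using y(4) n1 eps_pos opnorm_positive by (simp add: t_def)
    show "eps / 2 * opnorm g \<le> \<bar>lam\<bar>"
      using y(4) opnorm_positive by (simp add: lam_def abs_mult mult.commute)
    have "pdist u x = norm y / n"
      using n1 \<open>u + y \<noteq> 0\<close> pdist_scaleR[of 1 "1 / n" u "u + y"] pdist_u_add_orthogonal[OF y(1)]
      by (simp add: x_def n_def)
    also have "\<dots> \<le> norm y" using n1 by (simp add: divide_le_eq mult_le_cancel_left1)
    also have "\<dots> \<le> 2 * sigma g / eps" using y(2) by (simp add: radius_def)
    finally show "pdist u x \<le> 2 * sigma g / eps" .
  qed
qed

end

section \<open>Splitting off an eigenvalue from the characteristic polynomial\<close>

definition outer_product :: "real^'n \<Rightarrow> real^'n \<Rightarrow> real^'n^'n" where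
  "outer_product a b = (\<chi> i j. a$i * b$j)"

lemma outer_product_mult_vector: "outer_product a b *v w = (b \<bullet> w) *\<^sub>R a"
  by (simp add: outer_product_def vec_eq_iff matrix_vector_mult_def inner_vec_def sum_distrib_left
      mult_ac)

lemma mat_mult_vector: "(mat z :: real^'n^'n) *v w = z *\<^sub>R w"
  by (simp add: vec_eq_iff matrix_vector_mult_def mat_def if_distrib if_distribR sum.delta
      cong: if_cong)

lemma det_identity_add_outer_product:
  fixes x :: "real^'n"
  assumes "norm x = 1"
  shows "det (mat 1 + c *\<^sub>R outer_product x x) = 1 + c"
proof -
  fix k :: 'n
  define e :: "real^'n" where "e = axis k 1"
  obtain A where A: "orthogonal_matrix A" "A *v e = x"
    using orthogonal_matrix_exists_basis[OF assms] unfolding e_def by metis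
  have AtA: "transpose A ** A = mat 1" using A(1) by (simp add: orthogonal_matrix_def)
  have Atx: "transpose A *v x = e"
    using A(2) AtA by (metis matrix_vector_mul_assoc matrix_vector_mul_lid)
  have "transpose A ** (mat 1 + c *\<^sub>R outer_product x x) ** A = mat 1 + c *\<^sub>R outer_product e e"
  proof (subst matrix_eq, intro allI)
    fix w :: "real^'n"
    have "x \<bullet> (A *v w) = e \<bullet> w"
      using Atx by (simp add: flip: dot_lmul_matrix)
    then have "(transpose A ** (mat 1 + c *\<^sub>R outer_product x x) ** A) *v w
        = transpose A *v (A *v w + (c * (e \<bullet> w)) *\<^sub>R x)"
      by (simp add: matrix_vector_mul_assoc[symmetric] matrix_vector_mult_add_rdistrib
          outer_product_mult_vector del: transpose_matrix_vector flip: scaleR_matrix_vector_assoc)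
    also have "\<dots> = (mat 1 + c *\<^sub>R outer_product e e) *v w"
      by (simp add: matrix_vector_right_distrib matrix_vector_mult_scaleR matrix_vector_mul_assoc
          AtA Atx matrix_vector_mult_add_rdistrib outer_product_mult_vector
          del: transpose_matrix_vector flip: scaleR_matrix_vector_assoc)
    finally show "(transpose A ** (mat 1 + c *\<^sub>R outer_product x x) ** A) *v w
        = (mat 1 + c *\<^sub>R outer_product e e) *v w" .
  qed
  moreover have "det (mat 1 + c *\<^sub>R outer_product e e) = 1 + c"
  proof -
    have "(mat 1 + c *\<^sub>R outer_product e e) $ i $ j = (if i = j then if i = k then 1 + c else 1 else 0)"
      for i j by (auto simp: e_def outer_product_def mat_def axis_def)
    then show ?thesis by (simp add: det_diagonal prod.delta)
  qed
  moreover have "det (transpose A) * det A = 1"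
    using det_mul[of "transpose A" A] AtA by simp
  ultimately show ?thesis by (metis det_mul mult.commute mult.left_commute mult_1)
qed

lemma poly_det: "poly (det (A :: 'a::comm_ring_1 poly^'n^'n)) z = det (\<chi> i j. poly (A$i$j) z)"
  by (simp add: det_def poly_sum poly_prod)

lemma map_poly_of_real_add:
  "map_poly complex_of_real (p + q) = map_poly complex_of_real p + map_poly complex_of_real q"
  by (intro poly_eqI) (simp add: coeff_map_poly)

lemma map_poly_of_real_mult:
  "map_poly complex_of_real (p * q) = map_poly complex_of_real p * map_poly complex_of_real q"
  by (intro poly_eqI) (simp add: coeff_map_poly coeff_mult)

lemma map_poly_of_real_det:
  "map_poly complex_of_real (det A) = det (\<chi> i j. map_poly complex_of_real (A$i$j))"
proof -
  have sum: "map_poly complex_of_real (sum f S) = (\<Sum>i\<in>S. map_poly complex_of_real (f i))" for f S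
    by (induction S rule: infinite_finite_induct) (simp_all add: map_poly_of_real_add)
  have prod: "map_poly complex_of_real (prod f S) = (\<Prod>i\<in>S. map_poly complex_of_real (f i))" for f S
    by (induction S rule: infinite_finite_induct) (simp_all add: map_poly_of_real_mult)
  have "map_poly complex_of_real (of_int k) = of_int k" for k
    by (simp add: of_int_poly map_poly_pCons)
  then show ?thesis by (simp add: det_def sum prod map_poly_of_real_mult)
qed

lemma map_poly_of_real_linear:
  "map_poly complex_of_real [:a, b:] = [:complex_of_real a, complex_of_real b:]"
  by (intro poly_eqI) (simp add: coeff_map_poly coeff_pCons split: nat.splits)

lemma kernel_nonzero_if_det_eq_0:
  fixes A :: "'a::field^'n^'n"
  assumes "det A = 0"
  obtains y where "y \<noteq> 0" "A *v y = 0"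
  using assms invertible_det_nz invertible_left_inverse matrix_left_invertible_ker by metis

lemma poly_charpoly: "poly (charpoly g) z = det (mat z - g)"
  unfolding charpoly_def poly_det by (rule arg_cong[where f=det]) (simp add: vec_eq_iff mat_def)

lemma charpoly_nonzero: "charpoly (g::real^'n^'n) \<noteq> 0"
proof
  assume "charpoly g = 0"
  then have "det (mat (opnorm g + 1) - g) = 0" by (metis poly_charpoly poly_0)
  then obtain w where "w \<noteq> 0" "(mat (opnorm g + 1) - g) *v w = 0"
    by (rule kernel_nonzero_if_det_eq_0)
  then have "g *v w = (opnorm g + 1) *\<^sub>R w"
    by (simp add: matrix_vector_mult_diff_rdistrib mat_mult_vector)
  then have "(opnorm g + 1) * norm w \<le> opnorm g * norm w"
    using norm_matrix_vector_le_opnorm[of g w] opnorm_nonneg[of g] by simp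
  with \<open>w \<noteq> 0\<close> show False by (simp add: algebra_simps)
qed

text \<open>For a unit vector \<open>x\<close> the pencil is the identity on \<open>\<real> x\<close> and \<open>z - g\<close> on \<open>x\<^sup>\<bottom>\<close>
  (up to a component along \<open>x\<close>), so its determinant is the characteristic polynomial of the
  compression of \<open>g\<close> to \<open>x\<^sup>\<bottom>\<close>.\<close>

definition deflation_pencil :: "real^'n^'n \<Rightarrow> real^'n \<Rightarrow> real \<Rightarrow> real^'n^'n" where
  "deflation_pencil g x z =
     outer_product x x - g ** (mat 1 - outer_product x x) + z *\<^sub>R (mat 1 - outer_product x x)"

definition deflated_charpoly :: "real^'n^'n \<Rightarrow> real^'n \<Rightarrow> real poly" where
  "deflated_charpoly g x =
     det (\<chi> i j. [:deflation_pencil g x 0 $i$j, (mat 1 - outer_product x x) $i$j:])"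

lemma deflation_pencil_mult_vector:
  "deflation_pencil g x z *v w = (x \<bullet> w) *\<^sub>R x + (z *\<^sub>R p - g *v p)"
  if "p = w - (x \<bullet> w) *\<^sub>R x"
  using that
  by (simp add: deflation_pencil_def matrix_vector_mult_add_rdistrib matrix_vector_mult_diff_rdistrib
      outer_product_mult_vector matrix_vector_mult_diff_distrib
      flip: matrix_vector_mul_assoc scaleR_matrix_vector_assoc)

lemma poly_deflated_charpoly: "poly (deflated_charpoly g x) z = det (deflation_pencil g x z)"
  unfolding deflated_charpoly_def poly_det
  by (rule arg_cong[where f=det]) (simp add: vec_eq_iff deflation_pencil_def)

lemma charpoly_eq_linear_mult_deflated:
  fixes g :: "real^'n^'n"
  assumes "norm x = 1" "g *v x = lam *\<^sub>R x"
  shows "charpoly g = [:-lam, 1:] * deflated_charpoly g x"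
proof (intro poly_eq_poly_eq_iff[THEN iffD1] ext)
  fix z
  have xx: "x \<bullet> x = 1" using assms(1) by (simp flip: power2_norm_eq_inner)
  define D where "D = mat 1 + (z - lam - 1) *\<^sub>R outer_product x x"
  have "mat z - g = deflation_pencil g x z ** D"
  proof (subst matrix_eq, intro allI)
    fix w :: "real^'n"
    define p where "p = w - (x \<bullet> w) *\<^sub>R x"
    define y where "y = w + ((z - lam - 1) * (x \<bullet> w)) *\<^sub>R x"
    have Dw: "D *v w = y"
      by (simp add: D_def y_def matrix_vector_mult_add_rdistrib outer_product_mult_vector
          flip: scaleR_matrix_vector_assoc)
    have "y - (x \<bullet> y) *\<^sub>R x = p"
      by (simp add: y_def p_def inner_add_right xx algebra_simps)
    then have "deflation_pencil g x z *v y = (x \<bullet> y) *\<^sub>R x + (z *\<^sub>R p - g *v p)"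
      by (intro deflation_pencil_mult_vector) simp
    also have "\<dots> = ((z - lam) * (x \<bullet> w)) *\<^sub>R x + (z *\<^sub>R p - (g *v w - (lam * (x \<bullet> w)) *\<^sub>R x))"
      using assms(2) by (simp add: y_def p_def inner_add_right xx algebra_simps
          matrix_vector_mult_diff_distrib matrix_vector_mult_scaleR)
    also have "\<dots> = z *\<^sub>R w - g *v w" by (simp add: p_def algebra_simps)
    finally have "(deflation_pencil g x z ** D) *v w = z *\<^sub>R w - g *v w"
      by (simp add: Dw flip: matrix_vector_mul_assoc)
    then show "(mat z - g) *v w = (deflation_pencil g x z ** D) *v w"
      by (simp add: matrix_vector_mult_diff_rdistrib mat_mult_vector)
  qed
  moreover have "det D = z - lam"
    unfolding D_def using det_identity_add_outer_product[OF assms(1)] by simp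
  ultimately show "poly (charpoly g) z = poly ([:-lam, 1:] * deflated_charpoly g x) z"
    by (simp add: poly_charpoly poly_deflated_charpoly det_mul left_diff_distrib mult.commute)
qed

lemma projection_mult_vector: "(mat 1 - outer_product x x) *v w = w - (x \<bullet> w) *\<^sub>R x"
  by (simp add: matrix_vector_mult_diff_rdistrib outer_product_mult_vector)

lemma re_im_kernel_complex_pencil:
  fixes C P :: "real^'n^'n" and y :: "complex^'n"
  assumes "(\<chi> i j. complex_of_real (C $i$j) + mu * complex_of_real (P $i$j)) *v y = 0"
  defines "a \<equiv> \<chi> i. Re (y$i)" and "b \<equiv> \<chi> i. Im (y$i)"
  shows "C *v a + Re mu *\<^sub>R (P *v a) - Im mu *\<^sub>R (P *v b) = 0"
    and "C *v b + Im mu *\<^sub>R (P *v a) + Re mu *\<^sub>R (P *v b) = 0"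
proof -
  have row: "(\<Sum>j\<in>UNIV. (complex_of_real (C $i$j) + mu * complex_of_real (P $i$j)) * y$j) = 0" for i
    using assms(1) by (simp add: vec_eq_iff matrix_vector_mult_def)
  show "C *v a + Re mu *\<^sub>R (P *v a) - Im mu *\<^sub>R (P *v b) = 0"
    using arg_cong[OF row, of Re]
    by (simp add: vec_eq_iff Re_sum matrix_vector_mult_def a_def b_def sum_distrib_left sum.distrib
        sum_subtractf algebra_simps)
  show "C *v b + Im mu *\<^sub>R (P *v a) + Re mu *\<^sub>R (P *v b) = 0"
    using arg_cong[OF row, of Im]
    by (simp add: vec_eq_iff Im_sum matrix_vector_mult_def a_def b_def sum_distrib_left sum.distrib
        algebra_simps)
qed

lemma deflated_charpoly_root_imp_invariant_pair:
  fixes g :: "real^'n^'n"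
  assumes "norm x = 1" and "poly (map_poly complex_of_real (deflated_charpoly g x)) mu = 0"
  obtains A B t1 t2 where "A \<bullet> x = 0" "B \<bullet> x = 0" "A \<noteq> 0 \<or> B \<noteq> 0"
    "g *v A = Re mu *\<^sub>R A - Im mu *\<^sub>R B + t1 *\<^sub>R x"
    "g *v B = Im mu *\<^sub>R A + Re mu *\<^sub>R B + t2 *\<^sub>R x"
proof -
  define C P where "C = deflation_pencil g x 0" and "P = mat 1 - outer_product x x"
  have xx: "x \<bullet> x = 1" using assms(1) by (simp flip: power2_norm_eq_inner)
  have Pw: "P *v w = w - (x \<bullet> w) *\<^sub>R x" for w
    unfolding P_def by (rule projection_mult_vector)
  have Cw: "C *v w = (x \<bullet> w) *\<^sub>R x - g *v (P *v w)" for w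
    unfolding C_def Pw by (simp add: deflation_pencil_mult_vector)
  have Px: "(P *v w) \<bullet> x = 0" for w by (simp add: Pw inner_diff_left xx inner_commute[of x w])
  define M :: "complex^'n^'n" where
    "M = (\<chi> i j. complex_of_real (C $i$j) + mu * complex_of_real (P $i$j))"
  have "det M = 0"
    using assms(2) unfolding deflated_charpoly_def map_poly_of_real_det poly_det
    by (simp add: M_def C_def P_def map_poly_of_real_linear)
  then obtain y where "y \<noteq> 0" "M *v y = 0" by (rule kernel_nonzero_if_det_eq_0)
  define a b where "a = (\<chi> i. Re (y$i))" and "b = (\<chi> i. Im (y$i))"
  note re_im = re_im_kernel_complex_pencil[OF \<open>M *v y = 0\<close>[unfolded M_def], folded a_def b_def]
  have gA: "g *v (P *v a) = Re mu *\<^sub>R (P *v a) - Im mu *\<^sub>R (P *v b) + (x \<bullet> a) *\<^sub>R x"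
    using re_im(1) by (simp add: Cw algebra_simps eq_diff_eq)
  have gB: "g *v (P *v b) = Im mu *\<^sub>R (P *v a) + Re mu *\<^sub>R (P *v b) + (x \<bullet> b) *\<^sub>R x"
    using re_im(2) by (simp add: Cw algebra_simps eq_diff_eq)
  have "P *v a \<noteq> 0 \<or> P *v b \<noteq> 0"
  proof (rule ccontr)
    assume "\<not> ?thesis"
    then have "(x \<bullet> a) *\<^sub>R x = 0" "(x \<bullet> b) *\<^sub>R x = 0" "P *v a = 0" "P *v b = 0"
      using gA gB by auto
    then have "a = 0" "b = 0" using assms(1) by (auto simp: Pw)
    then show False using \<open>y \<noteq> 0\<close> by (simp add: a_def b_def vec_eq_iff complex_eq_iff)
  qed
  with Px gA gB show ?thesis using that by blast
qed

lemma rho_of_simple_dominant_root: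
  fixes g :: "real^'n^'n"
  assumes "charpoly g = [:-lam, 1:] * q"
    and "\<And>mu. poly (map_poly complex_of_real q) mu = 0 \<Longrightarrow> cmod mu \<le> B"
    and "0 \<le> B" "B < \<bar>lam\<bar>"
  shows "rho g 1 = \<bar>lam\<bar>" and "rho g 2 \<le> B"
proof -
  have "map_poly complex_of_real q \<noteq> 0"
    using charpoly_nonzero[of g] assms(1) by (auto simp: map_poly_eq_0_iff)
  then have "proots (map_poly complex_of_real (charpoly g))
      = add_mset (complex_of_real lam) (proots (map_poly complex_of_real q))"
    unfolding assms(1) map_poly_of_real_mult map_poly_of_real_linear by (subst proots_mult) simp_all
  moreover define L where "L = sorted_list_of_multiset (image_mset cmod (proots (map_poly complex_of_real q)))"
  moreover have small: "\<forall>t\<in>set L. t \<le> B"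
    using assms(2) \<open>map_poly complex_of_real q \<noteq> 0\<close> by (auto simp: L_def)
  moreover have "insort \<bar>lam\<bar> L = L @ [\<bar>lam\<bar>]"
    using small assms(4) by (intro sorted_insort_is_snoc) (auto simp: L_def)
  ultimately have moduli: "eig_moduli g = \<bar>lam\<bar> # rev L"
    by (simp add: eig_moduli_def)
  then show "rho g 1 = \<bar>lam\<bar>" by (simp add: rho_def)
  show "rho g 2 \<le> B"
  proof (cases "L = []")
    case False
    then have "rev L ! 0 \<in> set L" by (metis length_greater_0_conv length_rev nth_mem set_rev)
    with small False moduli assms(3) show ?thesis by (simp add: rho_def)
  qed (use moduli assms(3) in \<open>simp add: rho_def\<close>)
qed

section \<open>The dominant eigenvalue\<close>

context top_singular_vector
begin

lemma rho_of_eigenvector: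
  assumes "norm x = 1" "g *v x = lam *\<^sub>R x" "0 < \<bar>lam\<bar> * \<bar>v \<bullet> x\<bar>"
    and "k < 1" "sigma g * opnorm g \<le> k * (\<bar>lam\<bar> * \<bar>v \<bullet> x\<bar>)"
  shows "rho g 1 = \<bar>lam\<bar>" and "rho g 2 \<le> k * \<bar>lam\<bar>"
proof -
  have pos: "0 < \<bar>lam\<bar>" "0 < \<bar>v \<bullet> x\<bar>" using assms(3) by (auto simp: zero_less_mult_iff)
  have "0 \<le> k * (\<bar>lam\<bar> * \<bar>v \<bullet> x\<bar>)"
    using assms(5) sigma_nonneg[of g] opnorm_nonneg[of g] by (meson mult_nonneg_nonneg order_trans)
  then have "0 \<le> k" using assms(3) by (auto simp: zero_le_mult_iff)
  then have k: "0 \<le> k * \<bar>lam\<bar>" by simp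
  have "cmod mu \<le> k * \<bar>lam\<bar>"
    if root: "poly (map_poly complex_of_real (deflated_charpoly g x)) mu = 0" for mu
  proof -
    obtain A B t1 t2 where "A \<bullet> x = 0" "B \<bullet> x = 0" "A \<noteq> 0 \<or> B \<noteq> 0"
      "g *v A = Re mu *\<^sub>R A - Im mu *\<^sub>R B + t1 *\<^sub>R x"
      "g *v B = Im mu *\<^sub>R A + Re mu *\<^sub>R B + t2 *\<^sub>R x"
      by (rule deflated_charpoly_root_imp_invariant_pair[OF assms(1) root])
    from eigenvalue_bound_from_invariant_pair[OF assms(2) this]
    have "(cmod mu)\<^sup>2 * (v \<bullet> x)\<^sup>2 \<le> (sigma g * opnorm g)\<^sup>2"
      using assms(1) by (simp add: cmod_power2)
    then have "\<bar>cmod mu\<bar> * \<bar>v \<bullet> x\<bar> \<le> sigma g * opnorm g"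
      by (rule abs_mult_le_if_squares_le) (simp add: sigma_nonneg opnorm_nonneg)
    also have "\<dots> \<le> k * \<bar>lam\<bar> * \<bar>v \<bullet> x\<bar>" using assms(5) by (simp add: mult_ac)
    finally show ?thesis using pos(2) by simp
  qed
  moreover have "k * \<bar>lam\<bar> < \<bar>lam\<bar>" using assms(4) pos(1) by simp
  ultimately show "rho g 1 = \<bar>lam\<bar>" "rho g 2 \<le> k * \<bar>lam\<bar>"
    using rho_of_simple_dominant_root[OF charpoly_eq_linear_mult_deflated[OF assms(1,2)] _ k]
    by blast+
qed

lemma eigenvector_parallel:
  assumes "norm x = 1" "g *v x = lam *\<^sub>R x" "sigma g * opnorm g < \<bar>c\<bar> * \<bar>v \<bullet> x\<bar>"
    and "g *v w = c *\<^sub>R w"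
  shows "w = (x \<bullet> w) *\<^sub>R x"
proof (rule ccontr)
  define a where "a = w - (x \<bullet> w) *\<^sub>R x"
  assume "w \<noteq> (x \<bullet> w) *\<^sub>R x"
  then have "a \<noteq> 0" by (simp add: a_def)
  have "x \<bullet> x = 1" using assms(1) by (simp flip: power2_norm_eq_inner)
  then have "a \<bullet> x = 0" by (simp add: a_def inner_diff_left inner_commute[of w x])
  moreover have "g *v a = c *\<^sub>R a - 0 *\<^sub>R 0 + ((c - lam) * (x \<bullet> w)) *\<^sub>R x"
    using assms(2,4) by (simp add: a_def matrix_vector_mult_diff_distrib matrix_vector_mult_scaleR
        algebra_simps)
  moreover have "g *v 0 = 0 *\<^sub>R a + c *\<^sub>R 0 + 0 *\<^sub>R x" by simp
  ultimately have "(c\<^sup>2 + 0\<^sup>2) * (v \<bullet> x)\<^sup>2 \<le> (sigma g * opnorm g)\<^sup>2 * (norm x)\<^sup>2"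
    using \<open>a \<noteq> 0\<close> by (intro eigenvalue_bound_from_invariant_pair[OF assms(2)]) simp_all
  then have "\<bar>c\<bar> * \<bar>v \<bullet> x\<bar> \<le> sigma g * opnorm g"
    using assms(1) by (intro abs_mult_le_if_squares_le) (simp_all add: sigma_nonneg opnorm_nonneg)
  with assms(3) show False by simp
qed

lemma U1_subset_line: "sigma g < 1 \<Longrightarrow> U1 g \<subseteq> range (\<lambda>c. c *\<^sub>R u)"
  using image_parallel_u_if_norm_attained by (auto simp: U1_def V1_def)

lemma Eplus_subset_line:
  assumes "norm x = 1" "g *v x = lam *\<^sub>R x" "sigma g * opnorm g < rho g 1 * \<bar>v \<bullet> x\<bar>"
  shows "Eplus g \<subseteq> range (\<lambda>c. c *\<^sub>R x)"
proof
  fix w assume "w \<in> Eplus g"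
  then obtain c where c: "\<bar>c\<bar> = rho g 1" and "g *v w = c *\<^sub>R w" by (auto simp: Eplus_def)
  with assms(3) have "w = (x \<bullet> w) *\<^sub>R x"
    by (intro eigenvector_parallel[OF assms(1,2), of c]) (simp_all add: c)
  then show "w \<in> range (\<lambda>c. c *\<^sub>R x)" by (metis rangeI)
qed

end

context aligned_top_singular_vector
begin

lemma ratio_bound_le_half: "4 * sigma g / eps\<^sup>2 \<le> 1 / 2"
  using eps_pos sigma_le by (simp add: divide_le_eq)

lemma sigma_less_1: "sigma g < 1"
proof -
  have "eps\<^sup>2 \<le> 1" using eps_pos eps_le_1 by (simp add: power_le_one)
  then show ?thesis using sigma_le by simp
qed

lemma dominant_eigenvalue_estimates:
  obtains x where "eps / 2 * opnorm g \<le> rho g 1" "0 < rho g 1"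
    "rho g 2 \<le> 4 * sigma g / eps\<^sup>2 * rho g 1"
    "Eplus g \<subseteq> range (\<lambda>c. c *\<^sub>R x)" "pdist u x \<le> 2 * sigma g / eps"
proof -
  let ?k = "4 * sigma g / eps\<^sup>2"
  obtain x lam where x: "norm x = 1" "g *v x = lam *\<^sub>R x" "0 < \<bar>lam\<bar> * \<bar>v \<bullet> x\<bar>"
    and lam: "eps / 2 * opnorm g \<le> \<bar>lam\<bar>"
    and gap: "sigma g * opnorm g \<le> ?k * (\<bar>lam\<bar> * \<bar>v \<bullet> x\<bar>)"
    and dist: "pdist u x \<le> 2 * sigma g / eps"
    by (rule dominant_eigenvector)
  have rho: "rho g 1 = \<bar>lam\<bar>" "rho g 2 \<le> ?k * \<bar>lam\<bar>"
    using rho_of_eigenvector[OF x _ gap] ratio_bound_le_half by simp_all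
  have "?k * (\<bar>lam\<bar> * \<bar>v \<bullet> x\<bar>) \<le> 1 / 2 * (\<bar>lam\<bar> * \<bar>v \<bullet> x\<bar>)"
    using ratio_bound_le_half x(3) by (intro mult_right_mono) simp_all
  then have "sigma g * opnorm g < rho g 1 * \<bar>v \<bullet> x\<bar>" using gap x(3) rho(1) by simp
  then have "Eplus g \<subseteq> range (\<lambda>c. c *\<^sub>R x)" by (rule Eplus_subset_line[OF x(1,2)])
  with that[of x] x(3) rho lam dist show ?thesis by (simp add: zero_less_mult_iff)
qed

end

theorem lemma2p17:
  fixes g :: "real^'n^'n" and eps :: real
  assumes "0 < eps" "eps \<le> 1" "g \<noteq> 0"
    and "sigma g \<le> eps\<^sup>2 / 8"
    and "aligned g eps g"
  shows "proximal g
    \<and> rho g 1 \<ge> eps / 2 * opnorm g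
    \<and> rho g 2 / rho g 1 \<le> 4 * sigma g / eps\<^sup>2
    \<and> (\<forall>u \<in> U1 g - {0}. \<forall>v \<in> Eplus g - {0}. pdist u v \<le> 2 * sigma g / eps)"
proof -
  obtain v where "norm v = 1" "norm (g *v v) = opnorm g" by (rule opnorm_attained)
  with assms interpret aligned_top_singular_vector g v eps by unfold_locales
  obtain x where rho1: "eps / 2 * opnorm g \<le> rho g 1" "0 < rho g 1"
    and rho2: "rho g 2 \<le> 4 * sigma g / eps\<^sup>2 * rho g 1"
    and Eplus: "Eplus g \<subseteq> range (\<lambda>c. c *\<^sub>R x)" and dist: "pdist u x \<le> 2 * sigma g / eps"
    by (rule dominant_eigenvalue_estimates)
  have "pdist a b \<le> 2 * sigma g / eps" if ab: "a \<in> U1 g - {0}" "b \<in> Eplus g - {0}" for a b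
  proof -
    obtain c d where "a = c *\<^sub>R u" "b = d *\<^sub>R x"
      using ab Eplus U1_subset_line[OF sigma_less_1] by blast
    with ab dist show ?thesis by (auto simp: pdist_scaleR)
  qed
  moreover have "rho g 2 < rho g 1"
    using rho1(2) rho2 ratio_bound_le_half mult_right_mono[of _ "1 / 2" "rho g 1"] by fastforce
  moreover have "rho g 2 / rho g 1 \<le> 4 * sigma g / eps\<^sup>2" using rho1(2) rho2 by (simp add: divide_le_eq)
  ultimately show ?thesis using rho1 by (auto simp: proximal_def)
qed

end
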